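(* Let $T\in\mathbb R^{m\times n}$ be injective and satisfy the positive cone condition, $y\in\mathbb R^m$, and $\lambda>0$. Then there exists $\varepsilon\in(0,\lambda)$ such that $|x_\mu^i|\le|x_\lambda^i|$ for all $i\in I(\lambda)$ and all $\mu\in[\lambda-\varepsilon,\lambda]$.
   Context: For $\lambda>0$, $x_\lambda$ is the unique minimizer of $x\mapsto\frac{\lambda}{2}\|Tx-y\|_2^2+\|x\|_1$ on $\mathbb R^n$; $I(\lambda)=\{i:x_\lambda^i\ne0\}$. Positive cone condition: for every nonempty $J\subset\{1,\dots,n\}$, with $T^J$ the submatrix of columns indexed by $J$ and $S_J=((T^J)^TT^J)^{-1}$, one has $(S_J)_{i,i}-\sum_{j\ne i}|(S_J)_{i,j}|\ge0$ for all $i\in J$. *)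

theory Defs
  imports "HOL-Analysis.Analysis"
begin

definition lasso_obj :: "real^'n^'m \<Rightarrow> real^'m \<Rightarrow> real \<Rightarrow> real^'n \<Rightarrow> real" where
  "lasso_obj T y lam x = lam / 2 * (norm (T *v x - y))\<^sup>2 + (\<Sum>i\<in>UNIV. \<bar>x $ i\<bar>)"

definition lasso_sol :: "real^'n^'m \<Rightarrow> real^'m \<Rightarrow> real \<Rightarrow> real^'n" where
  "lasso_sol T y lam = (THE x. \<forall>z. lasso_obj T y lam x \<le> lasso_obj T y lam z)"

definition lasso_supp :: "real^'n^'m \<Rightarrow> real^'m \<Rightarrow> real \<Rightarrow> 'n set" where
  "lasso_supp T y lam = {i. lasso_sol T y lam $ i \<noteq> 0}"

definition gram :: "real^'n^'m \<Rightarrow> 'n \<Rightarrow> 'n \<Rightarrow> real" where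
  "gram T i j = column i T \<bullet> column j T"

text \<open>S_J = ((T^J)^T T^J)^{-1}, as a J x J indexed matrix (extended by 0 outside J x J).\<close>
definition SJ :: "real^'n^'m \<Rightarrow> 'n set \<Rightarrow> 'n \<Rightarrow> 'n \<Rightarrow> real" where
  "SJ T J = (THE S. (\<forall>i\<in>J. \<forall>j\<in>J. (\<Sum>k\<in>J. gram T i k * S k j) = (if i = j then 1 else 0))
                 \<and> (\<forall>i j. (i \<notin> J \<or> j \<notin> J) \<longrightarrow> S i j = 0))"

definition positive_cone_condition :: "real^'n^'m \<Rightarrow> bool" where
  "positive_cone_condition T \<longleftrightarrow>
     (\<forall>J::'n set. J \<noteq> {} \<longrightarrow>
        (\<forall>i\<in>J. SJ T J i i - (\<Sum>j\<in>J - {i}. \<bar>SJ T J i j\<bar>) \<ge> 0))"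

end

theory Submission
  imports Defs
begin

text \<open>Strong convexity of the objective in the fit T x makes the solution path Lipschitz in
  the weight: (lam + mu) |T (x_mu - x_lam)| \<le> 2 |lam - mu| |y|. Hence for mu near lam the
  support J of x_mu contains that of x_lam, and by the KKT conditions the correlations
  lam (T^T (y - T x_lam)) coincide on J with the signs s of x_mu. Then x_mu - x_lam is
  supported on J and equals (1/lam - 1/mu) S_J s; for mu \<le> lam the positive cone condition,
  a diagonal dominance of the rows of S_J, yields s_i (x_mu^i - x_lam^i) \<le> 0, that is
  |x_mu^i| \<le> |x_lam^i|.\<close>

section \<open>The LASSO objective and its minimizers\<close>

definition l1_norm :: "real^'n \<Rightarrow> real" where
  "l1_norm v = (\<Sum>i\<in>UNIV. \<bar>v $ i\<bar>)"

definition lasso_minimizer :: "real^'n^'m \<Rightarrow> real^'m \<Rightarrow> real \<Rightarrow> real^'n \<Rightarrow> bool" where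
  "lasso_minimizer T y lam x \<longleftrightarrow> (\<forall>u. lasso_obj T y lam x \<le> lasso_obj T y lam u)"

definition lasso_corr :: "real^'n^'m \<Rightarrow> real^'m \<Rightarrow> real \<Rightarrow> real^'n \<Rightarrow> 'n \<Rightarrow> real" where
  "lasso_corr T y lam x j = lam * (column j T \<bullet> (y - T *v x))"

lemma lasso_obj_eq: "lasso_obj T y lam x = lam / 2 * (norm (T *v x - y))\<^sup>2 + l1_norm x"
  by (simp add: lasso_obj_def l1_norm_def)

lemma l1_norm_nonneg: "0 \<le> l1_norm v"
  by (simp add: l1_norm_def sum_nonneg)

lemma lasso_obj_diff:
  "lasso_obj T y lam v - lasso_obj T y lam z =
     lam * ((T *v z - y) \<bullet> (T *v (v - z))) + lam / 2 * (norm (T *v (v - z)))\<^sup>2 + (l1_norm v - l1_norm z)"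
proof -
  have e: "T *v v - y = (T *v z - y) + T *v (v - z)"
    by (simp add: matrix_vector_mult_diff_distrib)
  have sq: "(norm (T *v v - y))\<^sup>2 =
      (norm (T *v z - y))\<^sup>2 + 2 * ((T *v z - y) \<bullet> (T *v (v - z))) + (norm (T *v (v - z)))\<^sup>2"
    unfolding e by (simp add: power2_norm_eq_inner inner_add_left inner_add_right inner_commute)
  show ?thesis
    unfolding lasso_obj_eq sq by (simp add: algebra_simps)
qed

lemma l1_norm_segment_le:
  assumes "0 \<le> t" "t \<le> 1"
  shows "l1_norm (z + t *\<^sub>R (v - z)) \<le> (1 - t) * l1_norm z + t * l1_norm v"
proof -
  have "\<bar>(z + t *\<^sub>R (v - z)) $ i\<bar> \<le> (1 - t) * \<bar>z $ i\<bar> + t * \<bar>v $ i\<bar>" for i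
  proof -
    have "(z + t *\<^sub>R (v - z)) $ i = (1 - t) * z $ i + t * v $ i"
      by (simp add: algebra_simps)
    also have "\<bar>\<dots>\<bar> \<le> (1 - t) * \<bar>z $ i\<bar> + t * \<bar>v $ i\<bar>"
      using abs_triangle_ineq[of "(1 - t) * z $ i" "t * v $ i"] assms by (simp add: abs_mult)
    finally show ?thesis .
  qed
  then have "l1_norm (z + t *\<^sub>R (v - z)) \<le> (\<Sum>i\<in>UNIV. (1 - t) * \<bar>z $ i\<bar> + t * \<bar>v $ i\<bar>)"
    unfolding l1_norm_def by (rule sum_mono)
  also have "\<dots> = (1 - t) * l1_norm z + t * l1_norm v"
    by (simp add: l1_norm_def sum.distrib sum_distrib_left)
  finally show ?thesis .
qed

lemma nonneg_of_nonneg_affine_near_zero: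
  fixes p q :: real
  assumes "\<And>t. 0 < t \<Longrightarrow> t \<le> 1 \<Longrightarrow> 0 \<le> p + q * t"
  shows "0 \<le> p"
proof (rule tendsto_lowerbound)
  show "((\<lambda>t. p + q * t) \<longlongrightarrow> p) (at_right 0)"
    by (auto intro!: tendsto_eq_intros)
  show "eventually (\<lambda>t. 0 \<le> p + q * t) (at_right 0)"
    using eventually_at_right_real[of 0 1] by (rule eventually_mono) (use assms in auto)
qed simp

lemma lasso_minimizer_variational_ineq:
  assumes "lasso_minimizer T y lam z" "0 < lam"
  shows "0 \<le> lam * ((T *v z - y) \<bullet> (T *v (v - z))) + (l1_norm v - l1_norm z)"
proof (rule nonneg_of_nonneg_affine_near_zero)
  let ?a = "lam * ((T *v z - y) \<bullet> (T *v (v - z)))"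
  let ?b = "lam / 2 * (norm (T *v (v - z)))\<^sup>2"
  fix t :: real
  assume t: "0 < t" "t \<le> 1"
  let ?u = "z + t *\<^sub>R (v - z)"
  have Tu: "T *v (?u - z) = t *\<^sub>R (T *v (v - z))"
    by (simp add: matrix_vector_mult_scaleR)
  have Tn: "norm (T *v (?u - z)) = t * norm (T *v (v - z))"
    unfolding Tu using t by simp
  have "0 \<le> lasso_obj T y lam ?u - lasso_obj T y lam z"
    using assms(1) by (simp add: lasso_minimizer_def)
  also have "\<dots> = t * ?a + t * t * ?b + (l1_norm ?u - l1_norm z)"
    unfolding lasso_obj_diff Tn unfolding Tu
    by (simp add: inner_scaleR_right power_mult_distrib power2_eq_square algebra_simps)
  also have "\<dots> \<le> t * ?a + t * t * ?b + t * (l1_norm v - l1_norm z)"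
    using l1_norm_segment_le[of t z v] t by (simp add: algebra_simps)
  finally have "0 \<le> t * ((?a + (l1_norm v - l1_norm z)) + ?b * t)"
    by (simp add: algebra_simps)
  then show "0 \<le> (?a + (l1_norm v - l1_norm z)) + ?b * t"
    using t by (simp add: zero_le_mult_iff)
qed

lemma lasso_minimizer_quadratic_growth:
  assumes "lasso_minimizer T y lam z" "0 < lam"
  shows "lasso_obj T y lam z + lam / 2 * (norm (T *v (v - z)))\<^sup>2 \<le> lasso_obj T y lam v"
  using lasso_minimizer_variational_ineq[OF assms, of v] lasso_obj_diff[of T y lam v z] by linarith

lemma continuous_on_lasso_obj: "continuous_on S (lasso_obj T y lam)"
  unfolding lasso_obj_def[abs_def]
  by (intro continuous_intros linear_continuous_on matrix_vector_mul_linear bounded_linear_intros)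

lemma lasso_minimizer_exists:
  assumes "0 < lam"
  shows "\<exists>z. lasso_minimizer T y lam z"
proof -
  define R where "R = lasso_obj T y lam 0"
  have "0 \<le> R"
    using assms by (simp add: R_def lasso_obj_def)
  then obtain z where zmin: "\<forall>u\<in>cball 0 R. lasso_obj T y lam z \<le> lasso_obj T y lam u"
    using continuous_attains_inf[OF compact_cball _ continuous_on_lasso_obj[of _ T y lam], of 0 R] by auto
  \<comment> \<open>outside the ball of radius R the l1 term alone exceeds the value at 0\<close>
  have "lasso_obj T y lam z \<le> lasso_obj T y lam u" for u
  proof (cases "u \<in> cball 0 R")
    case False
    then have "R < norm u" by simp
    also have "\<dots> \<le> l1_norm u" unfolding l1_norm_def by (rule norm_le_l1_cart)
    also have "\<dots> \<le> lasso_obj T y lam u" unfolding lasso_obj_eq using assms by simp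
    finally have "R < lasso_obj T y lam u" .
    moreover have "lasso_obj T y lam z \<le> R"
      using zmin \<open>0 \<le> R\<close> unfolding R_def by auto
    ultimately show ?thesis by simp
  qed (use zmin in auto)
  then show ?thesis by (auto simp: lasso_minimizer_def)
qed

lemma lasso_minimizer_unique:
  assumes "inj ((*v) T)" "0 < lam"
    and "lasso_minimizer T y lam z" "lasso_minimizer T y lam z'"
  shows "z' = z"
proof -
  have "lasso_obj T y lam z + lam / 2 * (norm (T *v (z' - z)))\<^sup>2 \<le> lasso_obj T y lam z'"
    by (rule lasso_minimizer_quadratic_growth[OF assms(3,2)])
  moreover have "lasso_obj T y lam z' \<le> lasso_obj T y lam z"
    using assms(4) by (simp add: lasso_minimizer_def)
  ultimately have "lam / 2 * (norm (T *v (z' - z)))\<^sup>2 \<le> 0"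
    by simp
  then have "(norm (T *v (z' - z)))\<^sup>2 \<le> 0"
    using assms(2) by (simp add: mult_le_0_iff)
  then have "T *v (z' - z) = 0"
    by simp
  then have "T *v z' = T *v z"
    by (simp add: matrix_vector_mult_diff_distrib)
  then show ?thesis
    using assms(1) by (simp add: inj_def)
qed

lemma lasso_minimizer_lasso_sol:
  assumes "inj ((*v) T)" "0 < lam"
  shows "lasso_minimizer T y lam (lasso_sol T y lam)"
proof -
  have "\<exists>!z. lasso_minimizer T y lam z"
    using lasso_minimizer_exists[OF assms(2)] lasso_minimizer_unique[OF assms] by blast
  then show ?thesis
    unfolding lasso_sol_def lasso_minimizer_def[symmetric] by (rule theI')
qed

lemma lasso_minimizer_coord_ineq:
  assumes "lasso_minimizer T y lam z" "0 < lam"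
  shows "lasso_corr T y lam z j * t \<le> \<bar>z $ j + t\<bar> - \<bar>z $ j\<bar>"
proof -
  let ?v = "z + t *\<^sub>R axis j 1"
  have "0 \<le> lam * ((T *v z - y) \<bullet> (T *v (?v - z))) + (l1_norm ?v - l1_norm z)"
    by (rule lasso_minimizer_variational_ineq[OF assms])
  also have "T *v (?v - z) = t *\<^sub>R column j T"
    by (simp add: matrix_vector_mult_scaleR matrix_vector_mult_basis)
  also have "l1_norm ?v - l1_norm z = (\<Sum>i\<in>UNIV. \<bar>?v $ i\<bar> - \<bar>z $ i\<bar>)"
    by (simp add: l1_norm_def sum_subtractf)
  also have "\<dots> = (\<Sum>i\<in>UNIV. if i = j then \<bar>z $ j + t\<bar> - \<bar>z $ j\<bar> else 0)"
    by (rule sum.cong) (auto simp: axis_def)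
  finally show ?thesis
    by (simp add: lasso_corr_def inner_diff_left inner_diff_right inner_commute algebra_simps)
qed

lemma lasso_corr_abs_le:
  assumes "lasso_minimizer T y lam z" "0 < lam"
  shows "\<bar>lasso_corr T y lam z j\<bar> \<le> 1"
  using lasso_minimizer_coord_ineq[OF assms, of j 1] lasso_minimizer_coord_ineq[OF assms, of j "-1"]
  by (simp add: abs_le_iff) linarith

lemma lasso_corr_eq_sgn:
  assumes "lasso_minimizer T y lam z" "0 < lam" "z $ j \<noteq> 0"
  shows "lasso_corr T y lam z j = sgn (z $ j)"
proof -
  let ?r = "lasso_corr T y lam z j"
  have "\<bar>?r\<bar> \<le> 1" by (rule lasso_corr_abs_le[OF assms(1,2)])
  moreover have le: "\<bar>z $ j\<bar> \<le> ?r * z $ j"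
    using lasso_minimizer_coord_ineq[OF assms(1,2), of j "- z $ j"] by simp
  ultimately show ?thesis
  proof (cases "z $ j > 0")
    case False
    with assms(3) have "z $ j < 0" by simp
    moreover from le this have "0 \<le> (?r + 1) * z $ j" by (simp add: algebra_simps)
    ultimately show ?thesis using \<open>\<bar>?r\<bar> \<le> 1\<close> by (simp add: zero_le_mult_iff)
  qed simp
qed

section \<open>Gram systems on a support\<close>

lemma inner_column_mult_vec: "column i T \<bullet> (T *v v) = (\<Sum>k\<in>UNIV. gram T i k * v $ k)"
  unfolding matrix_mult_sum scalar_mult_eq_scaleR gram_def
  by (simp add: inner_sum_right algebra_simps)

lemma inner_column_mult_vec_supported:
  assumes "\<forall>k. k \<notin> J \<longrightarrow> v $ k = 0"
  shows "column i T \<bullet> (T *v v) = (\<Sum>k\<in>J. gram T i k * v $ k)"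
  unfolding inner_column_mult_vec by (rule sum.mono_neutral_right) (use assms in auto)

lemma norm_mult_vec_sq: "(norm (T *v v))\<^sup>2 = (\<Sum>i\<in>UNIV. v $ i * (column i T \<bullet> (T *v v)))"
proof -
  have "(norm (T *v v))\<^sup>2 = (T *v v) \<bullet> (T *v v)"
    by (simp add: power2_norm_eq_inner)
  also have "\<dots> = (\<Sum>i\<in>UNIV. v $ i *\<^sub>R column i T) \<bullet> (T *v v)"
    by (subst (1) matrix_mult_sum) (simp add: scalar_mult_eq_scaleR)
  also have "\<dots> = (\<Sum>i\<in>UNIV. v $ i * (column i T \<bullet> (T *v v)))"
    by (simp add: inner_sum_left)
  finally show ?thesis .
qed

lemma eq_0_of_gram_supported:
  fixes T :: "real^'n^'m"
  assumes "inj ((*v) T)"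
    and "\<forall>k. k \<notin> J \<longrightarrow> v $ k = 0"
    and "\<forall>i\<in>J. column i T \<bullet> (T *v v) = 0"
  shows "v = 0"
proof -
  have "(norm (T *v v))\<^sup>2 = 0"
    unfolding norm_mult_vec_sq by (rule sum.neutral) (use assms(2,3) in auto)
  then have "T *v v = T *v 0" by simp
  then show ?thesis using assms(1) by (simp add: inj_def)
qed

lemma eq_of_gram_supported:
  fixes T :: "real^'n^'m"
  assumes "inj ((*v) T)"
    and "\<forall>k. k \<notin> J \<longrightarrow> v $ k = 0" "\<forall>k. k \<notin> J \<longrightarrow> w $ k = 0"
    and "\<forall>i\<in>J. column i T \<bullet> (T *v v) = column i T \<bullet> (T *v w)"
  shows "v = w"
  using eq_0_of_gram_supported[OF assms(1), of J "v - w"] assms(2-4)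
  by (simp add: matrix_vector_mult_diff_distrib inner_diff_right)

text \<open>Padding the Gram matrix of the columns in J with the identity turns it into an
  endomorphism of the whole space, so that its invertibility (which yields S_J) follows from
  injectivity alone.\<close>
definition restricted_gram :: "real^'n^'m \<Rightarrow> 'n set \<Rightarrow> real^'n \<Rightarrow> real^'n" where
  "restricted_gram T J v =
     (\<chi> i. if i \<in> J then column i T \<bullet> (T *v (\<chi> k. if k \<in> J then v $ k else 0)) else v $ i)"

lemma linear_restricted_gram:
  fixes T :: "real^'n^'m" and J :: "'n set"
  shows "linear (restricted_gram T J)"
proof (rule linearI)
  fix a b :: "real^'n"
  have e: "(\<chi> k. if k \<in> J then (a + b) $ k else 0) =
      (\<chi> k. if k \<in> J then a $ k else 0) + (\<chi> k. if k \<in> J then b $ k else 0)"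
    by (simp add: vec_eq_iff)
  show "restricted_gram T J (a + b) = restricted_gram T J a + restricted_gram T J b"
    unfolding restricted_gram_def e by (simp add: vec_eq_iff matrix_vector_right_distrib inner_add_right)
next
  fix r and b :: "real^'n"
  have e: "(\<chi> k. if k \<in> J then (r *\<^sub>R b) $ k else 0) = r *\<^sub>R (\<chi> k. if k \<in> J then b $ k else 0)"
    by (simp add: vec_eq_iff)
  show "restricted_gram T J (r *\<^sub>R b) = r *\<^sub>R restricted_gram T J b"
    unfolding restricted_gram_def e by (simp add: vec_eq_iff matrix_vector_mult_scaleR)
qed

lemma restricted_gram_supported:
  assumes "\<forall>k. k \<notin> J \<longrightarrow> v $ k = 0" "i \<in> J"
  shows "restricted_gram T J v $ i = column i T \<bullet> (T *v v)"
proof -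
  have "(\<chi> k. if k \<in> J then v $ k else 0) = v"
    using assms(1) by (auto simp: vec_eq_iff)
  then show ?thesis using assms(2) by (simp add: restricted_gram_def)
qed

lemma surj_restricted_gram:
  fixes T :: "real^'n^'m"
  assumes "inj ((*v) T)"
  shows "surj (restricted_gram T J)"
proof -
  have "v = 0" if v: "restricted_gram T J v = 0" for v
  proof -
    have out: "\<forall>k. k \<notin> J \<longrightarrow> v $ k = 0"
    proof (intro allI impI)
      fix k assume "k \<notin> J"
      with v[THEN arg_cong[where f = "\<lambda>v. v $ k"]] show "v $ k = 0"
        by (simp add: restricted_gram_def)
    qed
    have "\<forall>i\<in>J. column i T \<bullet> (T *v v) = 0"
    proof
      fix i assume "i \<in> J"
      with v[THEN arg_cong[where f = "\<lambda>v. v $ i"]] show "column i T \<bullet> (T *v v) = 0"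
        by (simp add: restricted_gram_supported[OF out])
    qed
    then show ?thesis using eq_0_of_gram_supported[OF assms out] by blast
  qed
  then have "inj (restricted_gram T J)"
    by (simp add: linear_injective_0[OF linear_restricted_gram])
  then show ?thesis
    using linear_injective_imp_surjective[OF linear_restricted_gram] by simp
qed

lemma SJ_spec:
  fixes T :: "real^'n^'m"
  assumes "inj ((*v) T)"
  shows "(\<forall>i\<in>J. \<forall>j\<in>J. (\<Sum>k\<in>J. gram T i k * SJ T J k j) = (if i = j then 1 else 0))
           \<and> (\<forall>i j. (i \<notin> J \<or> j \<notin> J) \<longrightarrow> SJ T J i j = 0)"
proof -
  let ?P = "\<lambda>S. (\<forall>i\<in>J. \<forall>j\<in>J. (\<Sum>k\<in>J. gram T i k * S k j) = (if i = j then 1 else 0))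
                 \<and> (\<forall>i j. (i \<notin> J \<or> j \<notin> J) \<longrightarrow> S i j = 0)"
  define u where "u j = inv (restricted_gram T J) (axis j 1)" for j
  have u: "restricted_gram T J (u j) = axis j 1" for j
    unfolding u_def by (rule surj_f_inv_f[OF surj_restricted_gram[OF assms]])
  have u_out: "\<forall>k. k \<notin> J \<longrightarrow> u j $ k = 0" if "j \<in> J" for j
  proof (intro allI impI)
    fix k assume "k \<notin> J"
    with that u[of j, THEN arg_cong[where f = "\<lambda>v. v $ k"]] show "u j $ k = 0"
      by (auto simp: restricted_gram_def axis_def)
  qed
  define S where "S = (\<lambda>i j. if i \<in> J \<and> j \<in> J then u j $ i else 0)"
  have "?P S"
  proof (intro conjI ballI allI impI)
    fix i j assume ij: "i \<in> J" "j \<in> J"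
    have "(\<Sum>k\<in>J. gram T i k * S k j) = (\<Sum>k\<in>J. gram T i k * u j $ k)"
      by (rule sum.cong) (use ij in \<open>auto simp: S_def\<close>)
    also have "\<dots> = restricted_gram T J (u j) $ i"
      using ij u_out[of j] by (simp add: restricted_gram_supported inner_column_mult_vec_supported)
    finally show "(\<Sum>k\<in>J. gram T i k * S k j) = (if i = j then 1 else 0)"
      by (simp add: u axis_def)
  qed (auto simp: S_def)
  moreover have "S' = S''" if "?P S'" "?P S''" for S' S''
  proof (intro ext)
    fix a b
    show "S' a b = S'' a b"
    proof (cases "a \<in> J \<and> b \<in> J")
      case True
      let ?col = "\<lambda>S. \<chi> k. if k \<in> J then S k b else 0"
      have "column i T \<bullet> (T *v ?col S) = (\<Sum>k\<in>J. gram T i k * S k b)" for i S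
        by (subst inner_column_mult_vec_supported[of J]) (auto intro!: sum.cong)
      then have "?col S' = ?col S''"
        using that True by (intro eq_of_gram_supported[OF assms, of J]) auto
      then have "?col S' $ a = ?col S'' $ a" by (rule arg_cong)
      then show ?thesis using True by simp
    qed (use that in auto)
  qed
  ultimately have "\<exists>!S. ?P S" by blast
  then show ?thesis unfolding SJ_def by (rule theI')
qed

lemma SJ_solves_gram_system:
  fixes T :: "real^'n^'m"
  assumes "inj ((*v) T)"
    and "\<forall>k. k \<notin> J \<longrightarrow> w $ k = 0"
    and "\<forall>j\<in>J. column j T \<bullet> (T *v w) = g j"
    and "i \<in> J"
  shows "w $ i = (\<Sum>k\<in>J. SJ T J i k * g k)"
proof -
  define v where "v = (\<chi> i. if i \<in> J then (\<Sum>k\<in>J. SJ T J i k * g k) else 0)"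
  have "column a T \<bullet> (T *v v) = g a" if a: "a \<in> J" for a
  proof -
    have "column a T \<bullet> (T *v v) = (\<Sum>j\<in>J. \<Sum>k\<in>J. gram T a j * SJ T J j k * g k)"
      by (subst inner_column_mult_vec_supported[of J]) (auto simp: v_def sum_distrib_left mult.assoc)
    also have "\<dots> = (\<Sum>k\<in>J. (\<Sum>j\<in>J. gram T a j * SJ T J j k) * g k)"
      by (subst sum.swap) (simp add: sum_distrib_right)
    also have "\<dots> = (\<Sum>k\<in>J. if a = k then g k else 0)"
      by (rule sum.cong) (use SJ_spec[OF assms(1)] a in auto)
    also have "\<dots> = g a"
      using a by simp
    finally show ?thesis .
  qed
  then have "w = v"
    using assms(2,3) by (intro eq_of_gram_supported[OF assms(1), of J]) (auto simp: v_def)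
  then show ?thesis
    using assms(4) by (simp add: v_def)
qed

section \<open>The solution path near lam\<close>

lemma lasso_minimizer_residual_le:
  assumes "lasso_minimizer T y lam x" "0 < lam"
  shows "norm (T *v x - y) \<le> norm y"
proof -
  have "lasso_obj T y lam x \<le> lasso_obj T y lam 0"
    using assms(1) by (simp add: lasso_minimizer_def)
  then have "lam / 2 * (norm (T *v x - y))\<^sup>2 + l1_norm x \<le> lam / 2 * (norm y)\<^sup>2"
    by (simp add: lasso_obj_eq l1_norm_def[of 0])
  then have "lam / 2 * (norm (T *v x - y))\<^sup>2 \<le> lam / 2 * (norm y)\<^sup>2"
    using l1_norm_nonneg[of x] by linarith
  then have "(norm (T *v x - y))\<^sup>2 \<le> (norm y)\<^sup>2"
    using assms(2) by simp
  then show ?thesis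
    by (simp add: power2_le_iff_abs_le)
qed

lemma abs_diff_squares_le:
  fixes a b Y :: real
  assumes "0 \<le> a" "0 \<le> b" "a \<le> Y" "b \<le> Y"
  shows "\<bar>a\<^sup>2 - b\<^sup>2\<bar> \<le> \<bar>a - b\<bar> * (2 * Y)"
proof -
  have "\<bar>a\<^sup>2 - b\<^sup>2\<bar> = \<bar>(a - b) * (a + b)\<bar>"
    by (simp add: power2_eq_square algebra_simps)
  also have "\<dots> = \<bar>a - b\<bar> * (a + b)"
    using assms by (simp add: abs_mult)
  also have "\<dots> \<le> \<bar>a - b\<bar> * (2 * Y)"
    using assms by (intro mult_left_mono) auto
  finally show ?thesis .
qed

text \<open>Adding the quadratic growth inequalities of both minimizers cancels the l1 terms and
  leaves only the change of the weight on the residuals.\<close>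
lemma lasso_minimizer_fit_stability:
  assumes x: "lasso_minimizer T y lam x" "0 < lam"
    and z: "lasso_minimizer T y mu z" "0 < mu"
  shows "(lam + mu) * norm (T *v (z - x)) \<le> 2 * \<bar>lam - mu\<bar> * norm y"
proof -
  define W where "W = norm (T *v (z - x))"
  define Nz where "Nz = norm (T *v z - y)"
  define Nx where "Nx = norm (T *v x - y)"
  have "norm (T *v (x - z)) = W"
    unfolding W_def by (metis matrix_vector_mult_diff_distrib norm_minus_commute)
  then have "lasso_obj T y mu z + mu / 2 * W\<^sup>2 \<le> lasso_obj T y mu x"
    using lasso_minimizer_quadratic_growth[OF z, of x] by simp
  moreover have "lasso_obj T y lam x + lam / 2 * W\<^sup>2 \<le> lasso_obj T y lam z"
    using lasso_minimizer_quadratic_growth[OF x, of z] by (simp add: W_def)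
  ultimately have "(lam + mu) * W\<^sup>2 \<le> (lam - mu) * (Nz\<^sup>2 - Nx\<^sup>2)"
    unfolding lasso_obj_eq Nz_def[symmetric] Nx_def[symmetric] by (simp add: algebra_simps)
  also have "\<dots> \<le> \<bar>lam - mu\<bar> * \<bar>Nz\<^sup>2 - Nx\<^sup>2\<bar>"
    by (metis abs_ge_self abs_mult)
  also have "\<bar>Nz\<^sup>2 - Nx\<^sup>2\<bar> \<le> \<bar>Nz - Nx\<bar> * (2 * norm y)"
    using lasso_minimizer_residual_le[OF x] lasso_minimizer_residual_le[OF z]
    by (intro abs_diff_squares_le) (auto simp: Nz_def Nx_def)
  also have "\<bar>Nz - Nx\<bar> \<le> W"
    using norm_triangle_ineq3[of "T *v z - y" "T *v x - y"]
    by (simp add: Nz_def Nx_def W_def matrix_vector_mult_diff_distrib)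
  finally have "W * ((lam + mu) * W) \<le> W * (2 * \<bar>lam - mu\<bar> * norm y)"
    by (simp add: power2_eq_square mult_right_mono algebra_simps)
  then show ?thesis
    using x(2) z(2) by (cases "W = 0") (auto simp: W_def)
qed

lemma isCont_lasso_sol:
  fixes T :: "real^'n^'m"
  assumes inj: "inj ((*v) T)" and "0 < lam"
  shows "isCont (lasso_sol T y) lam"
proof -
  obtain e where e: "0 < e" "\<And>v. e * norm v \<le> norm (T *v v)"
    using injective_imp_isometric[of UNIV "(*v) T"] inj_eq[OF inj, of _ 0] by auto
  define x where "x = lasso_sol T y lam"
  define C where "C = 2 * norm y / (lam * e)"
  have "norm (lasso_sol T y mu - x) \<le> C * \<bar>mu - lam\<bar>" if "0 < mu" for mu
  proof -
    have "lam * (e * norm (lasso_sol T y mu - x)) \<le> (lam + mu) * norm (T *v (lasso_sol T y mu - x))"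
      using e(2)[of "lasso_sol T y mu - x"] e(1) \<open>0 < lam\<close> that
      by (intro mult_mono) auto
    also have "\<dots> \<le> 2 * \<bar>lam - mu\<bar> * norm y"
      unfolding x_def using assms that
      by (intro lasso_minimizer_fit_stability lasso_minimizer_lasso_sol)
    finally show ?thesis
      using e(1) \<open>0 < lam\<close> by (simp add: C_def field_simps abs_minus_commute)
  qed
  moreover have "eventually (\<lambda>mu. 0 < mu) (at lam)"
    using \<open>0 < lam\<close> by (rule order_tendstoD(1)[OF tendsto_ident_at])
  ultimately have "eventually (\<lambda>mu. norm (lasso_sol T y mu - x) \<le> C * \<bar>mu - lam\<bar>) (at lam)"
    by (auto elim: eventually_mono)
  moreover have "((\<lambda>mu. C * \<bar>mu - lam\<bar>) \<longlongrightarrow> 0) (at lam)"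
    by (auto intro!: tendsto_eq_intros)
  ultimately have "((\<lambda>mu. lasso_sol T y mu - x) \<longlongrightarrow> 0) (at lam)"
    by (rule Lim_null_comparison)
  then show ?thesis
    unfolding isCont_def x_def by (rule LIM_zero_cancel)
qed

lemma isCont_lasso_corr_lasso_sol:
  fixes T :: "real^'n^'m"
  assumes "inj ((*v) T)" "0 < lam"
  shows "isCont (\<lambda>mu. lasso_corr T y mu (lasso_sol T y mu) j) lam"
  using isCont_lasso_sol[OF assms] unfolding isCont_def lasso_corr_def
  by (intro tendsto_intros bounded_linear.tendsto[OF matrix_vector_mul_bounded_linear])

lemma eventually_eq_of_abs_eq_1:
  fixes f :: "'a \<Rightarrow> real"
  assumes f: "(f \<longlongrightarrow> c) F" and "\<bar>c\<bar> \<le> 1"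
  shows "eventually (\<lambda>x. \<bar>f x\<bar> = 1 \<longrightarrow> f x = c) F"
proof -
  consider "\<bar>c\<bar> < 1" | "c = 1" | "c = -1"
    using \<open>\<bar>c\<bar> \<le> 1\<close> by linarith
  then show ?thesis
  proof cases
    case 1
    show ?thesis
      using order_tendstoD(2)[OF tendsto_rabs[OF f] 1] by (rule eventually_mono) simp
  next
    case 2
    show ?thesis
      using order_tendstoD(1)[OF f, of 0] 2 by (auto elim: eventually_mono)
  next
    case 3
    show ?thesis
      using order_tendstoD(2)[OF f, of 0] 3 by (auto elim: eventually_mono)
  qed
qed

lemma eventually_lasso_sign_pattern:
  fixes T :: "real^'n^'m" and y :: "real^'m"
  assumes "inj ((*v) T)" "0 < lam"
  defines "x \<equiv> lasso_sol T y lam"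
  shows "eventually (\<lambda>mu. \<forall>j.
           (x $ j \<noteq> 0 \<longrightarrow> lasso_sol T y mu $ j \<noteq> 0) \<and>
           (lasso_sol T y mu $ j \<noteq> 0 \<longrightarrow> lasso_corr T y lam x j = sgn (lasso_sol T y mu $ j)))
         (at lam)"
proof (rule eventually_all_finite)
  fix j
  have x: "lasso_minimizer T y lam x"
    unfolding x_def using assms(1,2) by (rule lasso_minimizer_lasso_sol)
  have sol: "(lasso_sol T y \<longlongrightarrow> x) (at lam)"
    using isCont_lasso_sol[OF assms(1,2)] by (simp add: isCont_def x_def)
  have "eventually (\<lambda>mu. x $ j \<noteq> 0 \<longrightarrow> lasso_sol T y mu $ j \<noteq> 0) (at lam)"
    using tendsto_imp_eventually_ne[OF tendsto_vec_nth[OF sol, of j], of 0]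
    by (cases "x $ j = 0") auto
  moreover have "eventually (\<lambda>mu. 0 < mu) (at lam)"
    using \<open>0 < lam\<close> by (rule order_tendstoD(1)[OF tendsto_ident_at])
  moreover have "eventually (\<lambda>mu. \<bar>lasso_corr T y mu (lasso_sol T y mu) j\<bar> = 1 \<longrightarrow>
                     lasso_corr T y mu (lasso_sol T y mu) j = lasso_corr T y lam x j) (at lam)"
    using isCont_lasso_corr_lasso_sol[OF assms(1,2), of y j] lasso_corr_abs_le[OF x \<open>0 < lam\<close>]
    unfolding isCont_def x_def by (rule eventually_eq_of_abs_eq_1)
  ultimately show "eventually (\<lambda>mu.
      (x $ j \<noteq> 0 \<longrightarrow> lasso_sol T y mu $ j \<noteq> 0) \<and>
      (lasso_sol T y mu $ j \<noteq> 0 \<longrightarrow> lasso_corr T y lam x j = sgn (lasso_sol T y mu $ j))) (at lam)"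
  proof eventually_elim
    case (elim mu)
    have "lasso_corr T y mu (lasso_sol T y mu) j = sgn (lasso_sol T y mu $ j)"
      if "lasso_sol T y mu $ j \<noteq> 0"
      using lasso_corr_eq_sgn[OF lasso_minimizer_lasso_sol[OF assms(1) elim(2)] elim(2) that] .
    then show ?case
      using elim by (auto simp: abs_sgn)
  qed
qed

lemma positive_cone_sign_sum_nonneg:
  assumes "positive_cone_condition T" "i \<in> J" "\<forall>k\<in>J. \<bar>s k\<bar> = (1::real)"
  shows "0 \<le> (\<Sum>k\<in>J. SJ T J i k * s k * s i)"
proof -
  have "- \<bar>SJ T J i k\<bar> \<le> SJ T J i k * s k * s i" if "k \<in> J" for k
    using assms(2,3) that abs_ge_minus_self[of "SJ T J i k * s k * s i"] by (simp add: abs_mult)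
  then have "- (\<Sum>k\<in>J - {i}. \<bar>SJ T J i k\<bar>) \<le> (\<Sum>k\<in>J - {i}. SJ T J i k * s k * s i)"
    using sum_mono[of "J - {i}" "\<lambda>k. - \<bar>SJ T J i k\<bar>"] by (simp add: sum_negf)
  moreover have "s i * s i = 1"
    using assms(2,3) abs_mult_self_eq[of "s i"] by simp
  moreover have "0 \<le> SJ T J i i - (\<Sum>k\<in>J - {i}. \<bar>SJ T J i k\<bar>)"
    using assms(1,2) unfolding positive_cone_condition_def by blast
  ultimately have "0 \<le> SJ T J i i * (s i * s i) + (\<Sum>k\<in>J - {i}. SJ T J i k * s k * s i)"
    by simp
  also have "\<dots> = (\<Sum>k\<in>J. SJ T J i k * s k * s i)"
    using assms(2) by (simp add: sum.remove mult.assoc)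
  finally show ?thesis .
qed

text \<open>With supports and signs matched, z - x solves the Gram system on the support J of z
  with right-hand side (1/lam - 1/mu) times the sign vector s, hence equals
  (1/lam - 1/mu) S_J s; diagonal dominance of S_J then gives s_i (z_i - x_i) \<le> 0.\<close>
lemma lasso_abs_le_of_sign_pattern:
  fixes T :: "real^'n^'m"
  assumes inj: "inj ((*v) T)" and pcc: "positive_cone_condition T"
    and mu: "0 < mu" "mu \<le> lam"
    and x: "lasso_minimizer T y lam x" and z: "lasso_minimizer T y mu z"
    and supp: "\<forall>j. x $ j \<noteq> 0 \<longrightarrow> z $ j \<noteq> 0"
    and sgn: "\<forall>j. z $ j \<noteq> 0 \<longrightarrow> lasso_corr T y lam x j = sgn (z $ j)"
  shows "\<bar>z $ i\<bar> \<le> \<bar>x $ i\<bar>"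
proof (cases "z $ i = 0")
  case False
  define J where "J = {j. z $ j \<noteq> 0}"
  define c where "c = lasso_corr T y lam x"
  have lam: "0 < lam" using mu by simp
  have c_sgn: "c j = sgn (z $ j)" if "j \<in> J" for j
    using sgn that by (simp add: c_def J_def)
  have c_abs: "\<bar>c j\<bar> = 1" if "j \<in> J" for j
    using c_sgn[OF that] that by (simp add: J_def abs_sgn)
  have "column j T \<bullet> (T *v (z - x)) = c j * (1 / lam - 1 / mu)" if "j \<in> J" for j
  proof -
    have "column j T \<bullet> (T *v (z - x)) = c j / lam - lasso_corr T y mu z j / mu"
      using lam mu by (simp add: c_def lasso_corr_def inner_diff_right matrix_vector_mult_diff_distrib)
    also have "lasso_corr T y mu z j = c j"
      using lasso_corr_eq_sgn[OF z mu(1)] c_sgn[OF that] that by (simp add: J_def)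
    finally show ?thesis by (simp add: field_simps)
  qed
  then have "(z - x) $ i = (\<Sum>k\<in>J. SJ T J i k * (c k * (1 / lam - 1 / mu)))"
    using False supp by (intro SJ_solves_gram_system[OF inj]) (auto simp: J_def)
  then have "c i * (z - x) $ i = (1 / lam - 1 / mu) * (\<Sum>k\<in>J. SJ T J i k * c k * c i)"
    by (simp add: sum_distrib_left algebra_simps)
  also have "\<dots> \<le> 0"
    using positive_cone_sign_sum_nonneg[OF pcc, of i J c] c_abs False mu
    by (intro mult_nonpos_nonneg) (auto simp: J_def field_simps)
  finally have "c i * z $ i \<le> c i * x $ i"
    by (simp add: algebra_simps)
  moreover have "c i * z $ i = \<bar>z $ i\<bar>"
    using c_sgn[of i] False by (auto simp: J_def sgn_if)
  moreover have "c i * x $ i \<le> \<bar>c i\<bar> * \<bar>x $ i\<bar>"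
    by (metis abs_ge_self abs_mult)
  moreover have "\<bar>c i\<bar> * \<bar>x $ i\<bar> \<le> \<bar>x $ i\<bar>"
    using lasso_corr_abs_le[OF x lam, of i] by (simp add: c_def mult_left_le_one_le)
  ultimately show ?thesis by linarith
qed simp

theorem mainTheorem17:
  fixes T :: "real^'n^'m" and y :: "real^'m" and lam :: real
  assumes "inj (\<lambda>x. T *v x)"
    and "positive_cone_condition T"
    and "lam > 0"
  shows "\<exists>\<epsilon>. 0 < \<epsilon> \<and> \<epsilon> < lam \<and>
    (\<forall>i\<in>lasso_supp T y lam. \<forall>\<mu>\<in>{lam - \<epsilon>..lam}.
        \<bar>lasso_sol T y \<mu> $ i\<bar> \<le> \<bar>lasso_sol T y lam $ i\<bar>)"
proof -
  obtain d where d: "0 < d" and pattern: "\<And>mu. mu \<noteq> lam \<Longrightarrow> dist mu lam < d \<Longrightarrow>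
      \<forall>j. (lasso_sol T y lam $ j \<noteq> 0 \<longrightarrow> lasso_sol T y mu $ j \<noteq> 0) \<and>
          (lasso_sol T y mu $ j \<noteq> 0 \<longrightarrow>
             lasso_corr T y lam (lasso_sol T y lam) j = sgn (lasso_sol T y mu $ j))"
    using eventually_lasso_sign_pattern[OF assms(1,3), of y] unfolding eventually_at by auto
  define \<epsilon> where "\<epsilon> = min (lam / 2) (d / 2)"
  have "\<bar>lasso_sol T y mu $ i\<bar> \<le> \<bar>lasso_sol T y lam $ i\<bar>" if mu: "mu \<in> {lam - \<epsilon>..lam}" for mu i
  proof (cases "mu = lam")
    case False
    have "0 < mu" "dist mu lam < d"
      using mu assms(3) d by (auto simp: \<epsilon>_def dist_real_def)
    then show ?thesis
      using lasso_abs_le_of_sign_pattern[OF assms(1,2) \<open>0 < mu\<close> _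
          lasso_minimizer_lasso_sol[OF assms(1,3)] lasso_minimizer_lasso_sol[OF assms(1) \<open>0 < mu\<close>]]
        pattern[OF False] mu by auto
  qed simp
  moreover have "0 < \<epsilon>" "\<epsilon> < lam"
    using assms(3) d by (auto simp: \<epsilon>_def)
  ultimately show ?thesis by blast
qed

end
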